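(* Let $g:\{0,1,2,3\}^*\to\{0,1,2,3\}^*$ be the morphism $g(0)=01$, $g(1)=20$, $g(2)=23$, $g(3)=02$, and $\tau$ the coding $\tau(0)=2$, $\tau(1)=1$, $\tau(2)=0$, $\tau(3)=1$; let $\mathbf{vtm}=\tau(g^\omega(0))$. Let $\zeta:\{0,1,2\}^*\to\{0,1\}^*$ be the morphism $\zeta(0)=111000110010110001110010$, $\zeta(1)=111000101100011100101100010$, $\zeta(2)=111000110010110001011100101100$. Then the infinite word $\zeta(\mathbf{vtm})$ contains only three distinct squares, namely $0^2$, $1^2$, and $(01)^2$. It is generated by a $2$-automaton with $88$ states (so its weight is $2\cdot 88=176$).
   Context: A square is a nonempty word $xx$; "containing" means as a factor. $g^\omega(0)$ denotes the infinite fixed point of $g$ starting with $0$. A $2$-automaton (DFAO) with $s$ states generates $(a_n)_{n\ge0}$ if on input the base-$2$ representation of $n$ (most significant digit first) it outputs $a_n$; equivalently the word is the image under a coding of a fixed point of a $2$-uniform morphism on $s$ letters. The weight of such a word is $2\cdot s$. *)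

theory Defs
  imports Main
begin

definition morph_list :: "('a \<Rightarrow> 'b list) \<Rightarrow> 'a list \<Rightarrow> 'b list" where
  "morph_list h w = concat (map h w)"

text \<open>Fixed point h^omega(a) of a morphism h with h(a) starting with a and
  |h(b)| >= 2 for all b (here: 2-uniform): the n-th letter is read off
  from the prefix h^(n+1)(a), which has length > n.\<close>
definition fixpt :: "('a \<Rightarrow> 'a list) \<Rightarrow> 'a \<Rightarrow> (nat \<Rightarrow> 'a)" where
  "fixpt h a = (\<lambda>n. ((morph_list h ^^ Suc n) [a]) ! n)"

text \<open>Image of an infinite word under a non-erasing morphism: the i-th letter
  is read off from the image of the prefix of length i+1 (of length > i).\<close>
definition morph_inf :: "('a \<Rightarrow> 'b list) \<Rightarrow> (nat \<Rightarrow> 'a) \<Rightarrow> (nat \<Rightarrow> 'b)" where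
  "morph_inf h x = (\<lambda>i. morph_list h (map x [0..<Suc i]) ! i)"

definition is_factor :: "'a list \<Rightarrow> (nat \<Rightarrow> 'a) \<Rightarrow> bool" where
  "is_factor u x \<longleftrightarrow> (\<exists>i. u = map x [i..<i + length u])"

definition is_square :: "'a list \<Rightarrow> bool" where
  "is_square u \<longleftrightarrow> (\<exists>v. v \<noteq> [] \<and> u = v @ v)"

text \<open>Base-2 representation, most significant digit first; 0 is represented
  by the empty word (canonical representation).\<close>
fun bin_lsd :: "nat \<Rightarrow> nat list" where
  "bin_lsd n = (if n = 0 then [] else n mod 2 # bin_lsd (n div 2))"
declare bin_lsd.simps[simp del]

definition bin_msd :: "nat \<Rightarrow> nat list" where
  "bin_msd n = rev (bin_lsd n)"

definition dfao2_generates ::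
  "nat \<Rightarrow> (nat \<Rightarrow> nat \<Rightarrow> nat) \<Rightarrow> (nat \<Rightarrow> 'b) \<Rightarrow> (nat \<Rightarrow> 'b) \<Rightarrow> bool" where
  "dfao2_generates s delta out a \<longleftrightarrow>
     0 < s \<and> (\<forall>q<s. \<forall>d<2. delta q d < s) \<and>
     (\<forall>n. out (foldl delta 0 (bin_msd n)) = a n)"

definition two_automatic_with_states :: "nat \<Rightarrow> (nat \<Rightarrow> 'b) \<Rightarrow> bool" where
  "two_automatic_with_states s a \<longleftrightarrow>
     (\<exists>delta (out :: nat \<Rightarrow> 'b). dfao2_generates s delta out a)"

definition g :: "nat \<Rightarrow> nat list" where
  "g b = (if b = 0 then [0,1] else if b = 1 then [2,0] else if b = 2 then [2,3] else [0,2])"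

definition tau :: "nat \<Rightarrow> nat" where
  "tau b = (if b = 0 then 2 else if b = 1 then 1 else if b = 2 then 0 else 1)"

definition vtm :: "nat \<Rightarrow> nat" where
  "vtm = tau \<circ> fixpt g 0"

definition zeta :: "nat \<Rightarrow> nat list" where
  "zeta b = (if b = 0 then [1,1,1,0,0,0,1,1,0,0,1,0,1,1,0,0,0,1,1,1,0,0,1,0]
    else if b = 1 then [1,1,1,0,0,0,1,0,1,1,0,0,0,1,1,1,0,0,1,0,1,1,0,0,0,1,0]
    else [1,1,1,0,0,0,1,1,0,0,1,0,1,1,0,0,0,1,0,1,1,1,0,0,1,0,1,1,0,0])"

end

theory Submission
  imports Defs
begin

text \<open>The Thue--Morse word \<open>t\<close> is overlap-free, and \<open>vtm\<close> is its difference sequence,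
  \<open>vtm k = t (k + 1) - t k + 1\<close>. Since \<open>|\<zeta> (vtm k)| = 27 + 3 t (k + 1) - 3 t k\<close>, the factor of
  \<open>\<zeta> (vtm)\<close> at positions \<open>27 k, \<dots>, 27 k + 26\<close> depends only on \<open>t (k - 1)\<close>, \<open>t k\<close> and
  \<open>t (k + 1)\<close>.

  Automaticity: because \<open>t (2 k) = t k\<close> and \<open>t (2 k + 1) = \<not> t k\<close>, the offset of a position in
  its block together with these three letters is updated digit by digit while the binary
  expansion of the position is read; identifying the 189 such contexts that have the same
  future leaves 88 states.

  Squares: a square of period \<open>p \<le> 54\<close> lies inside the blocks of seven consecutive letters of
  \<open>t\<close>, which contain no overlap of period 1 or 2, and the 30 such windows are checked by
  evaluation. For \<open>p = 27 Q + r \<ge> 55\<close> the first half of the square contains a full block;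
  comparing it with its translate forces \<open>r = 0\<close> or \<open>r = 3\<close>. The case \<open>r = 3\<close> is refuted by
  a single letter, and for \<open>r = 0\<close> the full blocks give \<open>t j = t (j + Q)\<close> on a run of \<open>Q\<close>
  positions, which the two partial blocks at its ends extend to an overlap of \<open>t\<close>.\<close>

section \<open>The Thue--Morse word\<close>

fun thue_morse :: "nat \<Rightarrow> bool" where
  "thue_morse n = (if n = 0 then False else thue_morse (n div 2) \<noteq> odd n)"

declare thue_morse.simps [simp del]

lemma thue_morse_0 [simp]: "\<not> thue_morse 0"
  by (simp add: thue_morse.simps)

lemma thue_morse_div2: "thue_morse n = (thue_morse (n div 2) \<noteq> odd n)"
  by (cases "n = 0") (simp_all add: thue_morse.simps [of n])

lemma thue_morse_double [simp]: "thue_morse (2 * n) = thue_morse n"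
  using thue_morse_div2 [of "2 * n"] by simp

lemma thue_morse_double_Suc [simp]: "thue_morse (Suc (2 * n)) = (\<not> thue_morse n)"
  using thue_morse_div2 [of "Suc (2 * n)"] by simp

lemma thue_morse_Suc_double_Suc [simp]: "thue_morse (Suc (Suc (2 * n))) = thue_morse (Suc n)"
  using thue_morse_double [of "Suc n"] by simp

lemma thue_morse_1 [simp]: "thue_morse (Suc 0)"
  using thue_morse_double_Suc [of 0] by simp

lemma thue_morse_Suc_even: "even n \<Longrightarrow> thue_morse (Suc n) = (\<not> thue_morse n)"
  by (auto elim: evenE)

lemma thue_morse_no_triple: "\<not> (thue_morse k = thue_morse (Suc k) \<and> thue_morse (Suc k) = thue_morse (Suc (Suc k)))"
  by (cases "even k") (simp_all add: thue_morse_Suc_even)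

lemma thue_morse_no_triple_at: "\<not> (thue_morse (k - 1) = thue_morse k \<and> thue_morse k = thue_morse (Suc k))"
  using thue_morse_no_triple [of "k - 1"] by (cases k) simp_all

definition has_period :: "(nat \<Rightarrow> 'a) \<Rightarrow> nat \<Rightarrow> nat \<Rightarrow> nat \<Rightarrow> bool" where
  "has_period x i n p \<longleftrightarrow> (\<forall>j<n. x (i + j) = x (i + j + p))"

lemma has_period_thue_morse_half:
  assumes "has_period thue_morse i (Suc (2 * q)) (2 * q)"
  shows "has_period thue_morse (i div 2) (Suc q) q"
  unfolding has_period_def
proof (intro allI impI)
  fix j assume "j < Suc q"
  then have "thue_morse (i + 2 * j) = thue_morse (i + 2 * j + 2 * q)"
    using assms unfolding has_period_def by simp
  moreover have "(i + 2 * j) div 2 = i div 2 + j" "(i + 2 * j + 2 * q) div 2 = i div 2 + j + q"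
    by simp_all
  moreover have "odd (i + 2 * j) = odd i" "odd (i + 2 * j + 2 * q) = odd i"
    by simp_all
  ultimately show "thue_morse (i div 2 + j) = thue_morse (i div 2 + j + q)"
    unfolding thue_morse_div2 [of "i + 2 * j"] thue_morse_div2 [of "i + 2 * j + 2 * q"]
    by (cases "even i") simp_all
qed

text \<open>The letters at \<open>n\<close> and \<open>n + 1\<close> differ for even \<open>n\<close>; an odd shift carries them to
  \<open>n + q\<close> and \<open>n + q + 1\<close>, which forces equal letters at the even positions \<open>n + q - 1\<close>
  and \<open>n + q + 1\<close>.\<close>
lemma thue_morse_odd_shift:
  assumes "even n" "odd q"
    and "thue_morse n = thue_morse (n + q)" "thue_morse (Suc n) = thue_morse (Suc n + q)"
  shows "thue_morse ((n + q + 1) div 2) = thue_morse ((n + q - 1) div 2)"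
proof -
  have q: "Suc (n + q - 1) = n + q" "Suc n + q = n + q + 1"
    using assms(2) by (auto elim: oddE)
  have "thue_morse (n + q + 1) = thue_morse (Suc n)"
    using assms(4) q(2) by simp
  also have "\<dots> = (\<not> thue_morse (n + q))"
    using assms(1,3) thue_morse_Suc_even [of n] by simp
  also have "\<dots> = thue_morse (n + q - 1)"
    using assms(1,2) thue_morse_Suc_even [of "n + q - 1"] q(1) by simp
  finally show ?thesis
    using assms(1,2) thue_morse_div2 [of "n + q + 1"] thue_morse_div2 [of "n + q - 1"] by simp
qed

lemma thue_morse_no_odd_overlap:
  assumes odd: "odd p"
  shows "\<not> has_period thue_morse i (Suc p) p"
proof
  assume "has_period thue_morse i (Suc p) p"
  then have eq: "\<And>j. j \<le> p \<Longrightarrow> thue_morse (i + j) = thue_morse (i + j + p)"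
    unfolding has_period_def by simp
  have shift: "thue_morse ((n + p + 1) div 2) = thue_morse ((n + p - 1) div 2)"
    if "even n" "i \<le> n" "n + 1 \<le> i + p" for n
    using thue_morse_odd_shift [of n p] odd that eq [of "n - i"] eq [of "n + 1 - i"] by simp
  have two_shifts: False if "even n" "i \<le> n" "n + 3 \<le> i + p" for n
  proof -
    define u where "u = (n + p - 1) div 2"
    have "(n + p + 1) div 2 = u + 1" "(n + 2 + p + 1) div 2 = u + 2" "(n + 2 + p - 1) div 2 = u + 1"
      using that odd unfolding u_def by (auto elim!: oddE)
    then show False
      using shift [of n] shift [of "n + 2"] that thue_morse_no_triple [of u] unfolding u_def by auto
  qed
  have "p = 1 \<or> p = 3 \<or> 5 \<le> p"
    using odd by presburger
  then consider "p = 1" | "odd i" "p = 3" | "even i" "3 \<le> p" | "odd i" "5 \<le> p"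
    by (cases "even i") auto
  then show False
  proof cases
    case 1
    then show False
      using eq [of 0] eq [of 1] thue_morse_no_triple [of i] by simp
  next
    case 2
    then obtain m where i: "i = Suc (2 * m)" by (auto elim: oddE)
    have "(i + 1 + p + 1) div 2 = m + 3" "(i + 1 + p - 1) div 2 = m + 2"
      using i 2 by presburger+
    then have "thue_morse (m + 3) = thue_morse (m + 2)"
      using shift [of "i + 1"] 2 i by (simp add: add.commute)
    moreover have "thue_morse (i + 3) = thue_morse (i + 3 + p)" "i + 3 = 2 * (m + 2)"
      "i + 3 + p = Suc (2 * (m + 3))"
      using eq [of 3] 2 i by simp_all
    ultimately show False
      by (metis thue_morse_double thue_morse_double_Suc)
  qed (use two_shifts [of i] two_shifts [of "i + 1"] in auto)
qed

lemma thue_morse_overlap_free: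
  assumes "0 < p"
  shows "\<not> has_period thue_morse i (Suc p) p"
  using assms
proof (induction p arbitrary: i rule: less_induct)
  case (less p)
  show ?case
  proof (cases "even p")
    case True
    then obtain q where "p = 2 * q" by blast
    then show ?thesis
      using less has_period_thue_morse_half by fastforce
  qed (rule thue_morse_no_odd_overlap)
qed

section \<open>The fixed point of g and vtm\<close>

definition g_letter :: "bool \<Rightarrow> bool \<Rightarrow> nat" where
  "g_letter a b = (if b then (if a then 1 else 0) else (if a then 2 else 3))"

lemma g_g_letter:
  "g (g_letter (thue_morse k) (thue_morse (Suc k))) =
     [g_letter (thue_morse (2 * k)) (thue_morse (Suc (2 * k))),
      g_letter (thue_morse (Suc (2 * k))) (thue_morse (2 * Suc k))]"
  by (cases "thue_morse k"; cases "thue_morse (Suc k)") (simp_all add: g_def g_letter_def)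

lemma morph_list_g_power:
  "(morph_list g ^^ n) [0] = map (\<lambda>k. g_letter (thue_morse k) (thue_morse (Suc k))) [0..<2 ^ n]"
proof (induction n)
  case 0
  then show ?case
    by (simp add: g_letter_def)
next
  case (Suc n)
  have "concat (map (\<lambda>k. g (g_letter (thue_morse k) (thue_morse (Suc k)))) [0..<m]) =
      map (\<lambda>k. g_letter (thue_morse k) (thue_morse (Suc k))) [0..<2 * m]" for m
    by (induction m) (simp_all only: g_g_letter, simp_all)
  then show ?case
    using Suc by (simp add: morph_list_def comp_def)
qed

definition vtm_of :: "bool \<Rightarrow> bool \<Rightarrow> nat" where
  "vtm_of a b = of_bool b + 1 - of_bool a"

lemma vtm_thue_morse: "vtm k = vtm_of (thue_morse k) (thue_morse (Suc k))"
proof -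
  have "k < 2 ^ Suc k"
    by (metis Suc_lessD less_exp)
  then have "fixpt g 0 k = g_letter (thue_morse k) (thue_morse (Suc k))"
    unfolding fixpt_def morph_list_g_power by simp
  then show ?thesis
    by (cases "thue_morse k"; cases "thue_morse (Suc k)") (simp_all add: vtm_def g_letter_def tau_def vtm_of_def)
qed

section \<open>Blocks of length 27\<close>

lemma morph_list_append: "morph_list h (xs @ ys) = morph_list h xs @ morph_list h ys"
  by (simp add: morph_list_def)

lemma length_morph_list_ge:
  assumes "\<And>a. h a \<noteq> []"
  shows "length xs \<le> length (morph_list h xs)"
proof (induction xs)
  case (Cons a xs)
  then show ?case
    using assms [of a] by (cases "h a") (simp_all add: morph_list_def)
qed simp

lemma morph_list_upt_split:
  "m \<le> n \<Longrightarrow> morph_list h (map x [0..<n]) = morph_list h (map x [0..<m]) @ morph_list h (map x [m..<n])"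
  by (metis morph_list_append map_append le_add_diff_inverse upt_add_eq_append zero_le)

lemma morph_inf_nth:
  assumes "\<And>a. h a \<noteq> []" and i: "i < length (morph_list h (map x [0..<n]))"
  shows "morph_inf h x i = morph_list h (map x [0..<n]) ! i"
proof -
  have prefix: "morph_list h (map x [0..<max n (Suc i)]) ! i = morph_list h (map x [0..<m]) ! i"
    if "m \<le> max n (Suc i)" "i < length (morph_list h (map x [0..<m]))" for m
    using morph_list_upt_split [OF that(1), of h x] that(2) by (simp add: nth_append)
  have "length (map x [0..<Suc i]) \<le> length (morph_list h (map x [0..<Suc i]))"
    by (rule length_morph_list_ge) (fact assms(1))
  then have "i < length (morph_list h (map x [0..<Suc i]))"
    by (simp del: upt_Suc)
  then show ?thesis
    using prefix [of "Suc i"] prefix [of n] i unfolding morph_inf_def by (simp del: upt_Suc)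
qed

abbreviation zeta_vtm :: "nat \<Rightarrow> nat" where
  "zeta_vtm \<equiv> morph_inf zeta vtm"

lemma length_zeta_vtm_of: "length (zeta (vtm_of a b)) + 3 * of_bool a = 27 + 3 * of_bool b"
  by (cases a; cases b) (simp_all add: zeta_def vtm_of_def)

lemma length_zeta_vtm_prefix:
  "length (morph_list zeta (map vtm [0..<k])) = 27 * k + 3 * of_bool (thue_morse k)"
proof (induction k)
  case (Suc k)
  then show ?case
    using length_zeta_vtm_of [of "thue_morse k" "thue_morse (Suc k)"]
    by (simp add: morph_list_def vtm_thue_morse vtm_of_def)
qed (simp add: morph_list_def)

text \<open>The factor of length 27 at position \<open>27 k\<close>, given \<open>t (k - 1)\<close>, \<open>t k\<close>, \<open>t (k + 1)\<close>: the
  image of the \<open>k\<close>-th letter of \<open>vtm\<close> starts at \<open>27 k + 3\<close> if \<open>t k\<close> and at \<open>27 k\<close> otherwise.\<close>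
definition block :: "bool \<Rightarrow> bool \<Rightarrow> bool \<Rightarrow> nat list" where
  "block a b c = take 27 (drop (27 - 3 * of_bool a) (zeta (vtm_of a b)) @ zeta (vtm_of b c))"

lemma block_simps:
  "block False False False = [1,1,1,0,0,0,1,0,1,1,0,0,0,1,1,1,0,0,1,0,1,1,0,0,0,1,0]"
  "block False False True = [1,1,1,0,0,0,1,1,0,0,1,0,1,1,0,0,0,1,0,1,1,1,0,0,1,0,1]"
  "block False True False = [1,0,0,1,1,1,0,0,0,1,1,0,0,1,0,1,1,0,0,0,1,1,1,0,0,1,0]"
  "block False True True = [1,0,0,1,1,1,0,0,0,1,0,1,1,0,0,0,1,1,1,0,0,1,0,1,1,0,0]"
  "block True False False = [1,1,1,0,0,0,1,0,1,1,0,0,0,1,1,1,0,0,1,0,1,1,0,0,0,1,0]"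
  "block True False True = [1,1,1,0,0,0,1,1,0,0,1,0,1,1,0,0,0,1,0,1,1,1,0,0,1,0,1]"
  "block True True False = [0,1,0,1,1,1,0,0,0,1,1,0,0,1,0,1,1,0,0,0,1,1,1,0,0,1,0]"
  "block True True True = [0,1,0,1,1,1,0,0,0,1,0,1,1,0,0,0,1,1,1,0,0,1,0,1,1,0,0]"
  by (simp_all add: block_def zeta_def vtm_of_def)

lemma length_block: "length (block a b c) = 27"
  by (cases a; cases b; cases c) (simp_all add: block_simps)

lemma block_binary: "e < 27 \<Longrightarrow> block a b c ! e \<le> 1"
  using nth_mem [of e "block a b c"] length_block [of a b c]
  by (cases a; cases b; cases c) (auto simp: block_simps)

text \<open>For \<open>k = 0\<close> the first argument is the junk value \<open>thue_morse 0\<close>; it does not matter,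
  because \<open>block\<close> ignores its first argument when the second one is \<open>False\<close>.\<close>
definition tm_block :: "nat \<Rightarrow> nat list" where
  "tm_block k = block (thue_morse (k - 1)) (thue_morse k) (thue_morse (Suc k))"

lemma length_tm_block: "length (tm_block k) = 27"
  by (simp add: tm_block_def length_block)

lemma nth_append_drop: "d \<le> length xs \<Longrightarrow> (xs @ ys) ! (d + e) = (drop d xs @ ys) ! e"
  by (auto simp: nth_append add.commute)

lemma zeta_nonempty: "zeta b \<noteq> []"
  by (simp add: zeta_def)

lemma zeta_vtm_block:
  assumes "e < 27"
  shows "zeta_vtm (27 * k + e) = tm_block k ! e"
proof (cases k)
  case 0
  have "vtm 0 = 2"
    by (simp add: vtm_thue_morse vtm_of_def)
  then have "zeta_vtm e = morph_list zeta (map vtm [0..<1]) ! e"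
    using assms by (intro morph_inf_nth zeta_nonempty) (simp add: morph_list_def zeta_def)
  also have "\<dots> = zeta (vtm 0) ! e"
    by (simp add: morph_list_def)
  moreover have "block (thue_morse (0 - 1)) (thue_morse 0) (thue_morse 1) = take 27 (zeta (vtm 0))"
    by (simp add: block_def vtm_thue_morse vtm_of_def zeta_def)
  ultimately show ?thesis
    using 0 assms by (simp add: tm_block_def)
next
  case (Suc j)
  let ?a = "thue_morse j" and ?b = "thue_morse k"
  have j: "length (morph_list zeta (map vtm [0..<j])) + (27 - 3 * of_bool ?a) = 27 * k"
    using Suc length_zeta_vtm_prefix [of j] by simp
  have split: "morph_list zeta (map vtm [0..<Suc k]) =
      morph_list zeta (map vtm [0..<j]) @ zeta (vtm_of ?a ?b) @ zeta (vtm k)"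
    using Suc by (simp add: morph_list_def vtm_thue_morse vtm_of_def)
  have long: "27 - 3 * of_bool ?a \<le> length (zeta (vtm_of ?a ?b))"
    using length_zeta_vtm_of [of ?a ?b] by simp
  have "27 * k + e < length (morph_list zeta (map vtm [0..<Suc k]))"
    using assms unfolding length_zeta_vtm_prefix by simp
  then have "zeta_vtm (27 * k + e) = morph_list zeta (map vtm [0..<Suc k]) ! (27 * k + e)"
    by (intro morph_inf_nth zeta_nonempty)
  also have "\<dots> = (drop (27 - 3 * of_bool ?a) (zeta (vtm_of ?a ?b)) @ zeta (vtm k)) ! e"
    unfolding split j [symmetric] add.assoc nth_append_length_plus using long by (rule nth_append_drop)
  also have "\<dots> = block ?a ?b (thue_morse (Suc k)) ! e"
    unfolding block_def vtm_thue_morse vtm_of_def by (rule nth_take [OF assms, symmetric])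
  finally show ?thesis
    using Suc by (simp add: tm_block_def)
qed

section \<open>An automaton with 88 states\<close>

type_synonym block_context = "nat \<times> bool option \<times> bool \<times> bool"

text \<open>For \<open>k = 0\<close> there is no previous letter; the junk value \<open>thue_morse (0 - 1)\<close> would
  violate the rule \<open>thue_morse (2 k - 1) = \<not> thue_morse (k - 1)\<close> on which \<open>context_step\<close>
  relies, hence the option type.\<close>
definition tm_context :: "nat \<Rightarrow> block_context" where
  "tm_context i = (let k = i div 27 in
     (i mod 27, if k = 0 then None else Some (thue_morse (k - 1)), thue_morse k, thue_morse (Suc k)))"

fun context_step :: "block_context \<Rightarrow> nat \<Rightarrow> block_context" where
  "context_step (e, a, b, c) d =
     (if 2 * e + d < 27 then (2 * e + d, map_option Not a, b, \<not> b)
      else (2 * e + d - 27, Some b, \<not> b, c))"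

fun context_letter :: "block_context \<Rightarrow> nat" where
  "context_letter (e, a, b, c) = block (a = Some True) b c ! e"

lemma tm_context_step:
  assumes "d < 2"
  shows "tm_context (2 * i + d) = context_step (tm_context i) d"
proof -
  define k e where "k = i div 27" and "e = i mod 27"
  have i: "i = 27 * k + e" and "e < 27"
    unfolding k_def e_def by simp_all
  have div_mod_27: "(27 * m + r) div 27 = m" "(27 * m + r) mod 27 = r" if "r < 27" for m r :: nat
    using that by simp_all
  show ?thesis
  proof (cases "2 * e + d < 27")
    case True
    have "2 * i + d = 27 * (2 * k) + (2 * e + d)"
      unfolding i by simp
    then have "(2 * i + d) div 27 = 2 * k" "(2 * i + d) mod 27 = 2 * e + d"
      using div_mod_27 [OF True] by metis+
    moreover have "2 * k - 1 = Suc (2 * (k - 1))" if "k \<noteq> 0"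
      using that by simp
    ultimately show ?thesis
      using True by (simp add: tm_context_def Let_def i)
  next
    case False
    then have "2 * i + d = 27 * Suc (2 * k) + (2 * e + d - 27)" "2 * e + d - 27 < 27"
      unfolding i using assms \<open>e < 27\<close> by simp_all
    then have "(2 * i + d) div 27 = Suc (2 * k)" "(2 * i + d) mod 27 = 2 * e + d - 27"
      using div_mod_27 by metis+
    then show ?thesis
      using False by (simp add: tm_context_def Let_def i)
  qed
qed

lemma zeta_vtm_context: "zeta_vtm i = context_letter (tm_context i)"
proof -
  have "zeta_vtm i = block (thue_morse (i div 27 - 1)) (thue_morse (i div 27)) (thue_morse (Suc (i div 27))) ! (i mod 27)"
    using zeta_vtm_block [of "i mod 27" "i div 27"] by (simp add: tm_block_def)
  then show ?thesis
    by (cases "i div 27") (simp_all add: tm_context_def)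
qed

definition admissible_triples :: "(bool option \<times> bool \<times> bool) list" where
  "admissible_triples = [(None, False, True), (Some False, False, True), (Some False, True, False),
     (Some False, True, True), (Some True, False, False), (Some True, False, True), (Some True, True, False)]"

definition contexts :: "block_context list" where
  "contexts = [(e, abc). abc \<leftarrow> admissible_triples, e \<leftarrow> [0..<27]]"

lemma tm_context_in_contexts: "tm_context i \<in> set contexts"
proof -
  have "(if k = 0 then None else Some (thue_morse (k - 1)), thue_morse k, thue_morse (Suc k)) \<in> set admissible_triples" for k
  proof (cases k)
    case (Suc j)
    then show ?thesis
      using thue_morse_no_triple [of j] unfolding admissible_triples_def
      by (cases "thue_morse j"; cases "thue_morse (Suc j)"; cases "thue_morse (Suc (Suc j))") simp_all
  qed (simp add: admissible_triples_def)
  moreover have "(e, t) \<in> set contexts \<longleftrightarrow> e < 27 \<and> t \<in> set admissible_triples" for e t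
    by (auto simp: contexts_def image_iff)
  ultimately show ?thesis
    unfolding tm_context_def Let_def by simp
qed

text \<open>Contexts with the same future output are identified: \<open>state_row\<close> numbers the 88 classes,
  and \<open>dfao_delta\<close> and \<open>dfao_out\<close> are the induced transition and output tables, which
  \<open>dfao_consistent\<close> confirms by evaluation.\<close>
definition state_row :: "bool option \<Rightarrow> bool \<Rightarrow> bool \<Rightarrow> nat list" where
  "state_row a b c =
     (if \<not> b \<and> c then [0..<27]
      else if \<not> b then [0..<7] @ [69, 70, 71, 72, 11, 73, 13, 74, 75, 16] @ [76..<86]
      else if c then [27..<37] @ [54, 55, 56, 57, 41, 58, 43] @ [59..<69]
      else if a = Some True then [86, 87] @ [29..<54]
      else [27..<54])"

fun context_state :: "block_context \<Rightarrow> nat" where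
  "context_state (e, a, b, c) = state_row a b c ! e"

definition dfao_delta :: "nat \<Rightarrow> nat \<Rightarrow> nat" where
  "dfao_delta q d = (if d = 0
     then [0, 2, 4, 6, 8, 10, 12, 14, 16, 18, 20, 22, 24, 26, 28, 30, 32, 34, 36, 55, 57, 58, 59, 61,
       63, 65, 67, 86, 29, 31, 33, 35, 37, 39, 41, 43, 45, 47, 49, 51, 53, 1, 3, 5, 69, 71, 11, 13, 75,
       76, 78, 80, 82, 84, 47, 49, 51, 53, 3, 7, 9, 11, 13, 15, 17, 19, 21, 23, 25, 14, 16, 18, 20, 24,
       28, 30, 34, 36, 38, 40, 42, 44, 46, 48, 50, 52, 27, 29]
     else [1, 3, 5, 7, 9, 11, 13, 15, 17, 19, 21, 23, 25, 27, 29, 31, 33, 35, 54, 56, 41, 43, 60, 62,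
       64, 66, 68, 87, 30, 32, 34, 36, 38, 40, 42, 44, 46, 48, 50, 52, 0, 2, 4, 6, 70, 72, 73, 74, 16,
       77, 79, 81, 83, 85, 48, 50, 52, 0, 4, 8, 10, 12, 14, 16, 18, 20, 22, 24, 26, 15, 17, 19, 21, 25,
       29, 31, 35, 37, 39, 41, 43, 45, 47, 49, 51, 53, 28, 30]) ! q"

definition dfao_out :: "nat \<Rightarrow> nat" where
  "dfao_out q = [1, 1, 1, 0, 0, 0, 1, 1, 0, 0, 1, 0, 1, 1, 0, 0, 0, 1, 0, 1, 1, 1, 0, 0, 1, 0, 1, 1, 0, 0,
     1, 1, 1, 0, 0, 0, 1, 1, 0, 0, 1, 0, 1, 1, 0, 0, 0, 1, 1, 1, 0, 0, 1, 0, 0, 1, 1, 0, 0, 1, 1, 0, 0,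
     1, 0, 1, 1, 0, 0, 0, 1, 1, 0, 0, 1, 1, 0, 1, 0, 1, 1, 0, 0, 0, 1, 0, 0, 1] ! q"

lemma dfao_delta_less: "list_all (\<lambda>q. dfao_delta q 0 < 88 \<and> dfao_delta q 1 < 88) [0..<88]"
  by code_simp

lemma dfao_consistent:
  "list_all (\<lambda>x. context_state (context_step x 0) = dfao_delta (context_state x) 0 \<and>
     context_state (context_step x 1) = dfao_delta (context_state x) 1 \<and>
     dfao_out (context_state x) = context_letter x) contexts"
  by code_simp

lemma dfao_delta_run: "foldl dfao_delta 0 (bin_msd n) = context_state (tm_context n)"
proof (induction n rule: less_induct)
  case (less n)
  show ?case
  proof (cases "n = 0")
    case True
    then show ?thesis
      by (simp add: bin_msd_def bin_lsd.simps tm_context_def state_row_def)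
  next
    case False
    then have "bin_msd n = bin_msd (n div 2) @ [n mod 2]"
      unfolding bin_msd_def by (subst bin_lsd.simps) simp
    then have "foldl dfao_delta 0 (bin_msd n) = dfao_delta (context_state (tm_context (n div 2))) (n mod 2)"
      using less False by simp
    also have "\<dots> = context_state (context_step (tm_context (n div 2)) (n mod 2))"
      using dfao_consistent tm_context_in_contexts [of "n div 2"]
      by (auto simp: list_all_iff mod2_eq_if)
    also have "\<dots> = context_state (tm_context n)"
      using tm_context_step [of "n mod 2" "n div 2"] by simp
    finally show ?thesis .
  qed
qed

theorem zeta_vtm_automatic: "two_automatic_with_states 88 zeta_vtm"
  unfolding two_automatic_with_states_def dfao2_generates_def
proof (intro exI conjI allI impI)
  fix n
  show "dfao_out (foldl dfao_delta 0 (bin_msd n)) = zeta_vtm n"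
    using dfao_consistent tm_context_in_contexts [of n]
    by (simp add: dfao_delta_run zeta_vtm_context list_all_iff)
next
  fix q d :: nat
  assume "q < 88" "d < 2"
  then show "dfao_delta q d < 88"
    using dfao_delta_less by (auto simp: list_all_iff less_2_cases_iff)
qed simp

section \<open>Squares\<close>

lemma has_period_shift:
  assumes "has_period x s p p" "s \<le> i" "i < s + p"
  shows "x i = x (i + p)"
  using assms unfolding has_period_def by (metis add_diff_inverse_nat add_less_cancel_left not_less)

lemma square_factor_iff:
  "is_square u \<and> is_factor u x \<longleftrightarrow> (\<exists>i p. 0 < p \<and> has_period x i p p \<and> u = map x [i..<i + 2 * p])"
proof
  assume "is_square u \<and> is_factor u x"
  then obtain v i where v: "v \<noteq> []" "u = v @ v" and i: "u = map x [i..<i + length u]"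
    unfolding is_square_def is_factor_def by blast
  have "has_period x i (length v) (length v)"
    unfolding has_period_def
  proof (intro allI impI)
    fix j assume "j < length v"
    then show "x (i + j) = x (i + j + length v)"
      using arg_cong [OF i, of "\<lambda>w. w ! j"] arg_cong [OF i, of "\<lambda>w. w ! (length v + j)"] v(2)
      by (simp add: nth_append algebra_simps)
  qed
  then show "\<exists>i p. 0 < p \<and> has_period x i p p \<and> u = map x [i..<i + 2 * p]"
    using v i by (metis length_append length_greater_0_conv mult_2)
next
  assume "\<exists>i p. 0 < p \<and> has_period x i p p \<and> u = map x [i..<i + 2 * p]"
  then obtain i p where p: "0 < p" "has_period x i p p" and u: "u = map x [i..<i + 2 * p]"
    by blast
  have "map x [i + p..<i + 2 * p] = map x [i..<i + p]"
    using p(2) by (simp add: list_eq_iff_nth_eq has_period_def algebra_simps)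
  then have "u = map x [i..<i + p] @ map x [i..<i + p]"
    unfolding u by (metis le_add1 map_append mult_2 add.assoc upt_add_eq_append)
  moreover have "map x [i..<i + p] \<noteq> []"
    using p(1) by simp
  ultimately have "is_square u"
    unfolding is_square_def by blast
  moreover have "is_factor u x"
    unfolding is_factor_def by (rule exI [of _ i]) (simp add: u)
  ultimately show "is_square u \<and> is_factor u x" ..
qed

fun window_word :: "bool list \<Rightarrow> nat list" where
  "window_word (a # b # c # bs) = block a b c @ window_word (b # c # bs)"
| "window_word _ = []"

lemma length_window_word: "length (window_word bs) = 27 * (length bs - 2)"
  by (induction bs rule: window_word.induct) (auto simp: length_block)

lemma window_word_nth:
  "i < 27 * (length bs - 2) \<Longrightarrow>
    window_word bs ! i = block (bs ! (i div 27)) (bs ! Suc (i div 27)) (bs ! Suc (Suc (i div 27))) ! (i mod 27)"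
proof (induction bs arbitrary: i rule: window_word.induct)
  case (1 a b c bs)
  show ?case
  proof (cases "i < 27")
    case False
    then have "(i - 27) div 27 = i div 27 - 1" "(i - 27) mod 27 = i mod 27" "i div 27 = Suc (i div 27 - 1)"
      by (simp_all add: le_div_geq le_mod_geq)
    then show ?thesis
      using "1.IH" [of "i - 27"] "1.prems" False by (simp add: nth_append length_block)
  qed (simp add: nth_append length_block)
qed simp_all

definition tm_window :: "nat \<Rightarrow> nat \<Rightarrow> bool list" where
  "tm_window k n = map (\<lambda>j. thue_morse (k + j - 1)) [0..<n]"

lemma zeta_vtm_window:
  assumes "i < 27 * (n - 2)"
  shows "zeta_vtm (27 * k + i) = window_word (tm_window k n) ! i"
proof -
  have "i div 27 + 2 < n"
    using assms by linarith
  then show ?thesis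
    using assms zeta_vtm_block [of "i mod 27" "k + i div 27"]
    by (simp add: window_word_nth tm_window_def tm_block_def algebra_simps)
qed

lemma tm_window_short_overlap_free:
  assumes "0 < p" "p \<le> 2" "i + 2 * p < n"
  shows "\<not> has_period ((!) (tm_window k n)) i (Suc p) p"
proof
  assume "has_period ((!) (tm_window k n)) i (Suc p) p"
  then have per: "\<forall>j<Suc p. tm_window k n ! (i + j) = tm_window k n ! (i + j + p)"
    unfolding has_period_def .
  then have eq: "thue_morse (k + i + j - 1) = thue_morse (k + i + j + p - 1)" if "j \<le> p" for j
    using that assms per by (auto simp: tm_window_def add.assoc)
  show False
  proof (cases "k + i = 0")
    case True
    moreover have "p = 1 \<or> p = 2"
      using assms(1,2) by auto
    ultimately show False
      using eq [of 0] eq [of 1] by auto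
  next
    case False
    have "has_period thue_morse (k + i - 1) (Suc p) p"
      unfolding has_period_def
    proof (intro allI impI)
      fix j assume "j < Suc p"
      moreover have "k + i - 1 + j = k + i + j - 1" "k + i - 1 + j + p = k + i + j + p - 1"
        using False by linarith+
      ultimately show "thue_morse (k + i - 1 + j) = thue_morse (k + i - 1 + j + p)"
        using eq [of j] by simp
    qed
    then show False
      using thue_morse_overlap_free assms(1) by blast
  qed
qed

text \<open>The finite checks below are evaluated by \<open>simp only\<close> on literal lists. Periods and
  shifts are counted by a ruler \<open>r\<close> of skipped letters, of which only the length matters, so
  that the evaluation needs no arithmetic.\<close>
fun agrees :: "'b list \<Rightarrow> 'a list \<Rightarrow> 'a list \<Rightarrow> bool" where
  "agrees [] _ _ = True"
| "agrees (_ # r) (x # u) (y # v) = (if x = y then agrees r u v else False)"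
| "agrees (_ # r) _ _ = False"

lemma agrees_iff:
  "agrees r u v \<longleftrightarrow> length r \<le> length u \<and> length r \<le> length v \<and> take (length r) u = take (length r) v"
  by (induction r u v rule: agrees.induct) auto

fun expected_square :: "'b list \<Rightarrow> nat list \<Rightarrow> bool" where
  "expected_square [_] _ = True"
| "expected_square [_, _] (x # y # _) = (x = 0 \<and> y = 1)"
| "expected_square _ _ = False"

lemma expected_square_cases:
  "expected_square r u \<Longrightarrow> length r = 1 \<or> (length r = 2 \<and> u ! 0 = 0 \<and> u ! 1 = 1)"
  by (induction r u rule: expected_square.induct) auto

fun squares_ok :: "nat list \<Rightarrow> nat list \<Rightarrow> nat list \<Rightarrow> bool" where
  "squares_ok r u [] = True"
| "squares_ok r u (y # v) =
     (if agrees r u (y # v) then (if expected_square r u then squares_ok (y # r) u v else False)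
      else squares_ok (y # r) u v)"

fun starts_ok :: "'b list \<Rightarrow> nat list \<Rightarrow> bool" where
  "starts_ok [] u = True"
| "starts_ok (_ # c) [] = True"
| "starts_ok (_ # c) (x # u) = (if squares_ok [x] (x # u) u then starts_ok c u else False)"

lemma squares_ok_sound:
  assumes "squares_ok r u (drop (length r) u)" "length r \<le> q" "0 < q" "2 * q \<le> length u"
    and "take q u = take q (drop q u)"
  shows "q = 1 \<or> (q = 2 \<and> u ! 0 = 0 \<and> u ! 1 = 1)"
  using assms
proof (induction "q - length r" arbitrary: r)
  case 0
  then have q: "length r = q" by simp
  obtain y v where yv: "drop q u = y # v"
    using 0 by (cases "drop q u") auto
  have "Suc (length v) = length u - q"
    using yv by (metis length_Cons length_drop)
  then have "agrees r u (drop q u)"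
    using 0 q by (simp add: agrees_iff)
  then have "expected_square r u"
    using 0(2) q yv by (auto split: if_splits)
  then show ?case
    using q expected_square_cases by blast
next
  case (Suc n)
  obtain y v where yv: "drop (length r) u = y # v"
    using Suc.hyps(2) Suc.prems(4) by (cases "drop (length r) u") auto
  then have v: "v = drop (length (y # r)) u"
    by (metis drop_Suc list.sel(3) tl_drop length_Cons)
  have "squares_ok (y # r) u v"
    using Suc.prems(1) yv by (auto split: if_splits)
  then show ?case
    using Suc.hyps(1) [of "y # r"] Suc.hyps(2) Suc.prems(2-5) v by simp
qed

lemma starts_ok_sound:
  assumes "starts_ok c w" "s < length c" "0 < q" "s + 2 * q \<le> length w"
    and "\<forall>j<q. w ! (s + j) = w ! (s + q + j)"
  shows "q = 1 \<or> (q = 2 \<and> w ! s = 0 \<and> w ! Suc s = 1)"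
  using assms
proof (induction c w arbitrary: s rule: starts_ok.induct)
  case (3 d c x u)
  have sq: "squares_ok [x] (x # u) u" and "starts_ok c u"
    using "3.prems"(1) by (auto split: if_splits)
  show ?case
  proof (cases s)
    case 0
    have "take q (x # u) = take q (drop q (x # u))"
      using "3.prems"(4,5) 0 by (auto simp: list_eq_iff_nth_eq)
    then show ?thesis
      using squares_ok_sound [of "[x]" "x # u" q] sq "3.prems"(3,4) 0 by simp
  next
    case (Suc s')
    then show ?thesis
      using "3.IH" [OF sq \<open>starts_ok c u\<close>, of s'] "3.prems"(2-5) by simp
  qed
qed auto

text \<open>These trivial congruence rules keep the simplifier from traversing the long literal lists
  in the arguments at every evaluation step.\<close>
lemma squares_ok_cong: "squares_ok r u v = squares_ok r u v" ..

lemma agrees_cong: "agrees r u v = agrees r u v" ..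

lemma starts_ok_cong: "starts_ok c u = starts_ok c u" ..

lemma window_check:
  assumes "\<not> (b0 = b1 \<and> b1 = b2)" "\<not> (b1 = b2 \<and> b2 = b3)" "\<not> (b2 = b3 \<and> b3 = b4)"
    "\<not> (b3 = b4 \<and> b4 = b5)" "\<not> (b4 = b5 \<and> b5 = b6)"
    "\<not> (b0 = b2 \<and> b1 = b3 \<and> b2 = b4)" "\<not> (b1 = b3 \<and> b2 = b4 \<and> b3 = b5)" "\<not> (b2 = b4 \<and> b3 = b5 \<and> b4 = b6)"
  shows "starts_ok (block b0 b1 b2) (window_word [b0, b1, b2, b3, b4, b5, b6])"
  using assms
  by (cases b0; cases b1; cases b2; cases b3; cases b4; cases b5; cases b6;
      simp only: simp_thms window_word.simps block_simps append.simps;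
      simp only: simp_thms starts_ok.simps squares_ok.simps agrees.simps expected_square.simps
        one_neq_zero zero_neq_one if_True if_False
        cong: if_weak_cong squares_ok_cong agrees_cong starts_ok_cong)

lemma tm_window_starts_ok: "starts_ok (tm_block k) (window_word (tm_window k 7))"
proof -
  let ?w = "tm_window k 7"
  have w: "?w = [thue_morse (k - 1), thue_morse k, thue_morse (Suc k), thue_morse (k + 2),
      thue_morse (k + 3), thue_morse (k + 4), thue_morse (k + 5)]"
    by (simp add: tm_window_def upt_rec eval_nat_numeral)
  have adm: "\<not> (\<forall>j<Suc p. ?w ! (i + j) = ?w ! (i + j + p))" if "0 < p" "p \<le> 2" "i + 2 * p < 7" for i p
    using tm_window_short_overlap_free [OF that] unfolding has_period_def .
  show ?thesis
    unfolding w tm_block_def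
    by (rule window_check)
      (use adm [of 1 0] adm [of 1 1] adm [of 1 2] adm [of 1 3] adm [of 1 4] adm [of 2 0] adm [of 2 1] adm [of 2 2]
        in \<open>auto simp: w All_less_Suc numeral_2_eq_2\<close>)
qed

lemma zeta_vtm_short_square:
  assumes "0 < p" "p \<le> 54" "has_period zeta_vtm s p p"
  shows "p = 1 \<or> (p = 2 \<and> zeta_vtm s = 0 \<and> zeta_vtm (Suc s) = 1)"
proof -
  define k e where "k = s div 27" and "e = s mod 27"
  let ?w = "window_word (tm_window k 7)"
  have s: "s = 27 * k + e" and "e < 27"
    unfolding k_def e_def by simp_all
  have at: "zeta_vtm (27 * k + i) = ?w ! i" if "i < 135" for i
    using zeta_vtm_window that by simp
  have "\<forall>j<p. ?w ! (e + j) = ?w ! (e + p + j)"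
  proof (intro allI impI)
    fix j assume "j < p"
    then have "zeta_vtm (s + j) = zeta_vtm (s + j + p)"
      using assms(3) unfolding has_period_def by blast
    moreover have "s + j = 27 * k + (e + j)" "s + j + p = 27 * k + (e + p + j)"
      using s by simp_all
    ultimately have "zeta_vtm (27 * k + (e + j)) = zeta_vtm (27 * k + (e + p + j))"
      by metis
    then show "?w ! (e + j) = ?w ! (e + p + j)"
      using at [of "e + j"] at [of "e + p + j"] \<open>j < p\<close> assms(2) \<open>e < 27\<close> by simp
  qed
  then have "p = 1 \<or> (p = 2 \<and> ?w ! e = 0 \<and> ?w ! Suc e = 1)"
    using starts_ok_sound [OF tm_window_starts_ok] assms(1,2) \<open>e < 27\<close>
    by (simp add: length_tm_block length_window_word tm_window_def)
  then show ?thesis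
    using at [of e] at [of "Suc e"] \<open>e < 27\<close> s by simp
qed

fun shifts_ok :: "'c list \<Rightarrow> nat list \<Rightarrow> nat list \<Rightarrow> nat list \<Rightarrow> (nat \<Rightarrow> bool) \<Rightarrow> bool" where
  "shifts_ok [] r u v P = True"
| "shifts_ok (_ # c) r u [] P = True"
| "shifts_ok (_ # c) r u (y # v) P =
     (if agrees u u (y # v) then (if P (length r) then shifts_ok c (y # r) u v P else False)
      else shifts_ok c (y # r) u v P)"

lemma shifts_ok_cong: "shifts_ok c r u v P = shifts_ok c r u v P" ..

lemma shifts_ok_sound:
  assumes "shifts_ok c r u v P" "i < length c" "u \<noteq> []" "length u \<le> length (drop i v)"
    and "take (length u) (drop i v) = u"
  shows "P (length r + i)"
  using assms
proof (induction c r u v P arbitrary: i rule: shifts_ok.induct)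
  case (3 d c r u y v P)
  show ?case
  proof (cases i)
    case 0
    then show ?thesis
      using "3.prems" by (auto simp: agrees_iff split: if_splits)
  next
    case (Suc i')
    have "agrees u u (y # v) \<longrightarrow> P (length r)" "shifts_ok c (y # r) u v P"
      using "3.prems"(1) by (auto split: if_splits)
    then show ?thesis
      using "3.IH" [of i'] "3.prems"(2-5) Suc by (cases "agrees u u (y # v)") simp_all
  qed
qed auto

definition block_shift_allowed :: "nat \<Rightarrow> bool \<Rightarrow> bool \<Rightarrow> bool \<Rightarrow> bool \<Rightarrow> bool \<Rightarrow> bool \<Rightarrow> bool \<Rightarrow> bool" where
  "block_shift_allowed r a b c x y z w \<longleftrightarrow>
     (r = 0 \<and> b = y \<and> c = z) \<or> (r = 3 \<and> a \<and> \<not> b \<and> \<not> c \<and> \<not> x \<and> y \<and> z \<and> \<not> w)"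

lemma block_shift_check:
  assumes "\<not> (a = b \<and> b = c)" "\<not> (x = y \<and> y = z)" "\<not> (y = z \<and> z = w)"
  shows "shifts_ok (block a b c) [] (block a b c) (block x y z @ block y z w)
    (\<lambda>r. block_shift_allowed r a b c x y z w)"
  using assms
  by (cases a; cases b; cases c; cases x; cases y; cases z; cases w;
      simp only: simp_thms block_simps append.simps;
      simp only: simp_thms block_shift_allowed_def shifts_ok.simps agrees.simps list.size(3) length_Cons numeral_3_eq_3 nat.distinct nat.inject
        one_neq_zero zero_neq_one if_True if_False
        cong: if_weak_cong shifts_ok_cong agrees_cong)

lemma zeta_vtm_block_shift:
  assumes per: "has_period zeta_vtm s p p" and p: "p = 27 * Q + r" "r < 27"
    and k: "s \<le> 27 * k" "27 * k + 27 \<le> s + p"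
  shows "block_shift_allowed r (thue_morse (k - 1)) (thue_morse k) (thue_morse (Suc k))
    (thue_morse (k + Q - 1)) (thue_morse (k + Q)) (thue_morse (Suc (k + Q))) (thue_morse (Suc (Suc (k + Q))))"
proof -
  let ?v = "window_word (tm_window (k + Q) 4)"
  have v: "?v = tm_block (k + Q) @ block (thue_morse (k + Q)) (thue_morse (Suc (k + Q))) (thue_morse (Suc (Suc (k + Q))))"
    by (simp add: tm_window_def tm_block_def upt_rec eval_nat_numeral)
  have "take 27 (drop r ?v) = tm_block k"
  proof (rule nth_equalityI)
    show "length (take 27 (drop r ?v)) = length (tm_block k)"
      using p(2) by (simp add: v length_block tm_block_def)
  next
    fix e assume "e < length (take 27 (drop r ?v))"
    then have e: "e < 27"
      by simp
    have "take 27 (drop r ?v) ! e = zeta_vtm (27 * (k + Q) + (r + e))"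
      using zeta_vtm_window [of "r + e" 4 "k + Q"] e p(2) by (simp add: length_window_word tm_window_def)
    also have "\<dots> = zeta_vtm (27 * k + e + p)"
      using p(1) by (simp add: algebra_simps)
    also have "\<dots> = zeta_vtm (27 * k + e)"
      using has_period_shift [OF per, of "27 * k + e"] k e by simp
    finally show "take 27 (drop r ?v) ! e = tm_block k ! e"
      using zeta_vtm_block [OF e] by simp
  qed
  moreover have "length ?v = 54"
    by (simp add: length_window_word tm_window_def)
  moreover have check: "shifts_ok (tm_block k) [] (tm_block k) ?v (\<lambda>r. block_shift_allowed r
      (thue_morse (k - 1)) (thue_morse k) (thue_morse (Suc k)) (thue_morse (k + Q - 1)) (thue_morse (k + Q))
      (thue_morse (Suc (k + Q))) (thue_morse (Suc (Suc (k + Q)))))"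
    unfolding v tm_block_def
    using thue_morse_no_triple_at [of k] thue_morse_no_triple_at [of "k + Q"] thue_morse_no_triple [of "k + Q"]
    by (intro block_shift_check) simp_all
  moreover have "tm_block k \<noteq> []"
    using length_tm_block [of k] by auto
  ultimately show ?thesis
    using shifts_ok_sound [OF check, of r] p(2) by (simp add: length_tm_block)
qed

lemma zeta_vtm_no_long_square_shift_3:
  assumes per: "has_period zeta_vtm s p p" and p: "p = 27 * Q + 3" "2 \<le> Q"
  shows False
proof -
  define k where "k = (s + 28) div 27"
  have k: "s + 2 \<le> 27 * k" "27 * k + 27 \<le> s + p" "1 \<le> k"
    using p unfolding k_def by linarith+
  then have tm: "thue_morse (k - 1)" "\<not> thue_morse k" "\<not> thue_morse (k + Q - 1)" "thue_morse (k + Q)"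
    "thue_morse (Suc (k + Q))"
    using zeta_vtm_block_shift [OF per p(1)] by (auto simp: block_shift_allowed_def)
  define x where "x = 27 * (k - 1) + 25"
  have "zeta_vtm x = zeta_vtm (x + p)"
    using has_period_shift [OF per] k p unfolding x_def by simp
  moreover have "zeta_vtm x = block (thue_morse (k - 1 - 1)) True False ! 25"
    using zeta_vtm_block [of 25 "k - 1"] tm k(3) unfolding x_def tm_block_def by simp
  moreover have "x + p = 27 * (k + Q) + 1"
    using k(3) p unfolding x_def by simp
  then have "zeta_vtm (x + p) = block False True True ! 1"
    using zeta_vtm_block [of 1 "k + Q"] tm unfolding tm_block_def by simp
  ultimately show False
    by (cases "thue_morse (k - 1 - 1)") (simp_all add: block_simps)
qed

lemma zeta_vtm_long_square_full_blocks:
  assumes per: "has_period zeta_vtm s (27 * Q) (27 * Q)" and "2 \<le> Q"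
    and j: "s div 27 < j" "j \<le> s div 27 + Q"
  shows "thue_morse j = thue_morse (j + Q)"
proof -
  have shift: "thue_morse k = thue_morse (k + Q) \<and> thue_morse (Suc k) = thue_morse (Suc (k + Q))"
    if "s div 27 < k" "k < s div 27 + Q" for k
    using zeta_vtm_block_shift [OF per, of Q 0 k] that by (simp add: block_shift_allowed_def)
  show ?thesis
  proof (cases "j < s div 27 + Q")
    case True
    then show ?thesis
      using shift [of j] j by blast
  next
    case False
    then have "s div 27 < j - 1" "j - 1 < s div 27 + Q" "Suc (j - 1) = j" "Suc (j - 1 + Q) = j + Q"
      using j \<open>2 \<le> Q\<close> by auto
    then show ?thesis
      using shift [of "j - 1"] by simp
  qed
qed

fun split_agrees :: "nat list \<Rightarrow> nat list \<Rightarrow> nat list \<Rightarrow> bool" where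
  "split_agrees (x # xs) (y # ys) (z # zs) =
     (if x = y \<and> xs = ys then True else if y = z then split_agrees xs ys zs else False)"
| "split_agrees xs ys zs = (xs = ys)"

lemma split_agrees_cong: "split_agrees xs ys zs = split_agrees xs ys zs" ..

lemma split_agrees_intro:
  assumes "drop e xs = drop e ys" "take e ys = take e zs" "length xs = length ys" "length ys = length zs"
  shows "split_agrees xs ys zs"
  using assms
proof (induction xs ys zs arbitrary: e rule: split_agrees.induct)
  case (1 x xs y ys z zs)
  then show ?case
    by (cases e) auto
qed auto

lemma block_boundary_check:
  assumes "\<not> (a = b \<and> b = c)" "\<not> (x = y \<and> y = c)" "\<not> (x = y \<and> y = z)"
    and "split_agrees (block a b c) (block x y c) (block x y z)"
  shows "b = y \<or> c = z"
  using assms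
  by (cases a; cases b; cases c; cases x; cases y; cases z;
      simp only: simp_thms block_simps;
      simp only: simp_thms split_agrees.simps list.inject one_neq_zero zero_neq_one if_True if_False
        cong: if_weak_cong split_agrees_cong)

lemma zeta_vtm_long_square_split_agrees:
  assumes per: "has_period zeta_vtm s (27 * Q) (27 * Q)" and Q: "2 \<le> Q"
  defines "m \<equiv> s div 27"
  shows "split_agrees (tm_block m) (tm_block (m + Q)) (tm_block (m + 2 * Q))"
proof -
  define e0 where "e0 = s mod 27"
  have s: "s = 27 * m + e0" and "e0 < 27"
    unfolding m_def e0_def by simp_all
  have "drop e0 (tm_block m) = drop e0 (tm_block (m + Q))"
  proof (rule nth_equalityI)
    fix i assume "i < length (drop e0 (tm_block m))"
    then have i: "e0 + i < 27"
      by (simp add: length_tm_block)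
    have "zeta_vtm (27 * m + (e0 + i)) = zeta_vtm (27 * m + (e0 + i) + 27 * Q)"
      using has_period_shift [OF per] i s Q by simp
    then show "drop e0 (tm_block m) ! i = drop e0 (tm_block (m + Q)) ! i"
      using zeta_vtm_block [OF i, of m] zeta_vtm_block [OF i, of "m + Q"] i
      by (simp add: length_tm_block algebra_simps)
  qed (simp add: length_tm_block)
  moreover have "take e0 (tm_block (m + Q)) = take e0 (tm_block (m + 2 * Q))"
  proof (rule nth_equalityI)
    fix i assume "i < length (take e0 (tm_block (m + Q)))"
    then have i: "i < e0"
      by (simp add: length_tm_block)
    have "zeta_vtm (27 * (m + Q) + i) = zeta_vtm (27 * (m + Q) + i + 27 * Q)"
      using has_period_shift [OF per, of "27 * (m + Q) + i"] i s Q \<open>e0 < 27\<close> by simp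
    then show "take e0 (tm_block (m + Q)) ! i = take e0 (tm_block (m + 2 * Q)) ! i"
      using zeta_vtm_block [of i "m + Q"] zeta_vtm_block [of i "m + 2 * Q"] i \<open>e0 < 27\<close>
      by (simp add: algebra_simps)
  qed (simp add: length_tm_block)
  ultimately show ?thesis
    by (rule split_agrees_intro) (simp_all add: length_tm_block)
qed

lemma zeta_vtm_long_square_boundary:
  assumes per: "has_period zeta_vtm s (27 * Q) (27 * Q)" and Q: "2 \<le> Q"
  defines "m \<equiv> s div 27"
  shows "thue_morse m = thue_morse (m + Q) \<or> thue_morse (Suc m) = thue_morse (Suc (m + 2 * Q))"
proof -
  have eq: "thue_morse j = thue_morse (j + Q)" if "m < j" "j \<le> m + Q" for j
    using zeta_vtm_long_square_full_blocks [OF per Q] that unfolding m_def by blast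
  have t1: "thue_morse (Suc (m + Q)) = thue_morse (Suc m)"
    using eq [of "Suc m"] Q by simp
  have a2: "m + 2 * Q - 1 = m + Q - 1 + Q" and a3: "m + 2 * Q = m + Q + Q"
    using Q by simp_all
  have t2: "thue_morse (m + 2 * Q - 1) = thue_morse (m + Q - 1)"
    unfolding a2 using eq [of "m + Q - 1"] Q by simp
  have t3: "thue_morse (m + 2 * Q) = thue_morse (m + Q)"
    unfolding a3 using eq [of "m + Q"] Q by simp
  have split: "split_agrees (block (thue_morse (m - 1)) (thue_morse m) (thue_morse (Suc m)))
      (block (thue_morse (m + Q - 1)) (thue_morse (m + Q)) (thue_morse (Suc m)))
      (block (thue_morse (m + Q - 1)) (thue_morse (m + Q)) (thue_morse (Suc (m + 2 * Q))))"
    using zeta_vtm_long_square_split_agrees [OF per Q] t1 unfolding m_def [symmetric] tm_block_def t2 t3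
    by simp
  have triple: "\<not> (thue_morse (m + Q - 1) = thue_morse (m + Q) \<and> thue_morse (m + Q) = thue_morse (Suc m))"
    using thue_morse_no_triple_at [of "m + Q"] t1 by simp
  have triple': "\<not> (thue_morse (m + Q - 1) = thue_morse (m + Q) \<and> thue_morse (m + Q) = thue_morse (Suc (m + 2 * Q)))"
    using thue_morse_no_triple_at [of "m + 2 * Q"] unfolding t2 t3 .
  show ?thesis
    by (rule block_boundary_check [OF thue_morse_no_triple_at triple triple' split])
qed

lemma zeta_vtm_no_long_square_shift_0:
  assumes per: "has_period zeta_vtm s (27 * Q) (27 * Q)" and Q: "2 \<le> Q"
  shows False
proof -
  define m where "m = s div 27"
  have eq: "thue_morse j = thue_morse (j + Q)" if "m < j" "j \<le> m + Q" for j
    using zeta_vtm_long_square_full_blocks [OF per Q] that unfolding m_def by blast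
  have "thue_morse m = thue_morse (m + Q) \<or> thue_morse (Suc m) = thue_morse (Suc (m + 2 * Q))"
    using zeta_vtm_long_square_boundary [OF per Q] unfolding m_def .
  then show False
  proof
    assume left: "thue_morse m = thue_morse (m + Q)"
    have "has_period thue_morse m (Suc Q) Q"
      unfolding has_period_def
    proof (intro allI impI)
      fix j assume "j < Suc Q"
      then show "thue_morse (m + j) = thue_morse (m + j + Q)"
        using left eq [of "m + j"] by (cases j) auto
    qed
    then show False
      using thue_morse_overlap_free Q by simp
  next
    assume right: "thue_morse (Suc m) = thue_morse (Suc (m + 2 * Q))"
    have "has_period thue_morse (Suc m) (Suc Q) Q"
      unfolding has_period_def
    proof (intro allI impI)
      fix j assume "j < Suc Q"
      then show "thue_morse (Suc m + j) = thue_morse (Suc m + j + Q)"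
        using right eq [of "Suc m + j"] eq [of "Suc m"] Q by (cases "j = Q") (auto simp: mult_2 add.assoc)
    qed
    then show False
      using thue_morse_overlap_free Q by simp
  qed
qed

lemma zeta_vtm_no_long_square:
  assumes "55 \<le> p"
  shows "\<not> has_period zeta_vtm s p p"
proof
  assume per: "has_period zeta_vtm s p p"
  define Q r where "Q = p div 27" and "r = p mod 27"
  have p: "p = 27 * Q + r" "r < 27" "2 \<le> Q"
    using assms unfolding Q_def r_def by simp_all
  define k where "k = (s + 26) div 27"
  have "s \<le> 27 * k" "27 * k + 27 \<le> s + p"
    using assms unfolding k_def by linarith+
  then have "r = 0 \<or> r = 3"
    using zeta_vtm_block_shift [OF per p(1,2)] by (auto simp: block_shift_allowed_def)
  then show False
    using per p zeta_vtm_no_long_square_shift_0 zeta_vtm_no_long_square_shift_3 by auto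
qed

lemma zeta_vtm_square_period:
  assumes "0 < p" "has_period zeta_vtm s p p"
  shows "p = 1 \<or> (p = 2 \<and> zeta_vtm s = 0 \<and> zeta_vtm (Suc s) = 1)"
  using zeta_vtm_short_square [OF assms(1) _ assms(2)] zeta_vtm_no_long_square assms(2) by fastforce

lemma zeta_vtm_binary: "zeta_vtm i \<le> 1"
  using zeta_vtm_block [of "i mod 27" "i div 27"] block_binary by (simp add: tm_block_def)

lemma zeta_vtm_prefix: "i < 27 \<Longrightarrow> zeta_vtm i = block False False True ! i"
  using zeta_vtm_block [of i 0] by (simp add: tm_block_def)

theorem zeta_vtm_squares: "{u. is_square u \<and> is_factor u zeta_vtm} = {[0, 0], [1, 1], [0, 1, 0, 1]}"
proof (intro equalityI subsetI)
  fix u assume "u \<in> {u. is_square u \<and> is_factor u zeta_vtm}"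
  then obtain i p where p: "0 < p" "has_period zeta_vtm i p p" and u: "u = map zeta_vtm [i..<i + 2 * p]"
    using square_factor_iff by blast
  from zeta_vtm_square_period [OF p] show "u \<in> {[0, 0], [1, 1], [0, 1, 0, 1]}"
  proof (elim disjE conjE)
    assume "p = 1"
    then have "u = [zeta_vtm i, zeta_vtm (Suc i)]" "zeta_vtm (Suc i) = zeta_vtm i"
      using u p(2) \<open>p = 1\<close> by (simp_all add: has_period_def upt_rec)
    moreover have "zeta_vtm i = 0 \<or> zeta_vtm i = 1"
      using zeta_vtm_binary [of i] by auto
    ultimately show ?thesis
      by auto
  next
    assume "p = 2" "zeta_vtm i = 0" "zeta_vtm (Suc i) = 1"
    moreover have "zeta_vtm (i + 2) = zeta_vtm i" "zeta_vtm (i + 3) = zeta_vtm (Suc i)"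
      using p(2) \<open>p = 2\<close> unfolding has_period_def by (simp_all add: All_less_Suc numeral_2_eq_2 numeral_3_eq_3)
    ultimately show ?thesis
      using u by (simp add: upt_rec numeral_2_eq_2 numeral_3_eq_3)
  qed
next
  have "is_square [0, 0 :: nat] \<and> is_factor [0, 0] zeta_vtm"
    unfolding square_factor_iff
    by (rule exI [of _ 3], rule exI [of _ 1]) (simp add: has_period_def zeta_vtm_prefix block_simps upt_rec)
  moreover have "is_square [1, 1 :: nat] \<and> is_factor [1, 1] zeta_vtm"
    unfolding square_factor_iff
    by (rule exI [of _ 0], rule exI [of _ 1]) (simp add: has_period_def zeta_vtm_prefix block_simps upt_rec)
  moreover have "is_square [0, 1, 0, 1 :: nat] \<and> is_factor [0, 1, 0, 1] zeta_vtm"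
    unfolding square_factor_iff
    by (rule exI [of _ 9], rule exI [of _ 2]) (simp add: has_period_def zeta_vtm_prefix block_simps upt_rec numeral_2_eq_2 All_less_Suc)
  ultimately show "u \<in> {u. is_square u \<and> is_factor u zeta_vtm}" if "u \<in> {[0, 0], [1, 1], [0, 1, 0, 1]}" for u
    using that by blast
qed

theorem theorem4:
  shows "{u. is_square u \<and> is_factor u (morph_inf zeta vtm)} = {[0,0], [1,1], [0,1,0,1]}
         \<and> two_automatic_with_states 88 (morph_inf zeta vtm)"
  using zeta_vtm_squares zeta_vtm_automatic by simp

end
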